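(* Let $\theta\in(\pi/3,\pi/2)$ and define \[ \zeta=\zeta(\theta)=-\frac{1}{2\cos\theta},\qquad z=z(\theta)=\frac{2\cos\theta}{\sqrt{(1-4\cos^2\theta)^3}}. \] Then the three zeros in $t$ of $1+t^2+z(\theta)t^3$ are \[ t_0=-\frac{e^{-i\theta}}{z(2\cos\theta+\zeta)},\qquad t_1=t_0e^{2i\theta},\qquad t_2=\zeta e^{i\theta}t_0. \] *)

theory Defs
  imports Complex_Main
begin

definition zeta :: "real \<Rightarrow> real" where
  "zeta \<theta> = - 1 / (2 * cos \<theta>)"

definition zz :: "real \<Rightarrow> real" where
  "zz \<theta> = 2 * cos \<theta> / sqrt ((1 - 4 * (cos \<theta>)^2) ^ 3)"

definition t0 :: "real \<Rightarrow> complex" where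
  "t0 \<theta> = - cis (- \<theta>) / complex_of_real (zz \<theta> * (2 * cos \<theta> + zeta \<theta>))"

definition t1 :: "real \<Rightarrow> complex" where
  "t1 \<theta> = t0 \<theta> * cis (2 * \<theta>)"

definition t2 :: "real \<Rightarrow> complex" where
  "t2 \<theta> = complex_of_real (zeta \<theta>) * cis \<theta> * t0 \<theta>"

end

theory Submission
  imports Defs
begin

text \<open>With \<open>c = cos \<theta> \<in> (0, 1/2)\<close> and \<open>D = sqrt (1 - 4 c\<^sup>2)\<close> the three claimed roots are
  \<open>D e\<^sup>-\<^sup>i\<^sup>\<theta>\<close>, \<open>D e\<^sup>i\<^sup>\<theta>\<close> and \<open>-D/(2c)\<close>, and \<open>z = 2c/D\<^sup>3\<close>. The conjugate pair contributes the real
  quadratic factor \<open>t\<^sup>2 - 2cDt + D\<^sup>2\<close>; multiplying out against \<open>t + D/(2c)\<close>, the linear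
  coefficient cancels and \<open>D\<^sup>2 = 1 - 4c\<^sup>2\<close> turns the remaining coefficients into those of
  \<open>1 + t\<^sup>2 + z t\<^sup>3\<close>.\<close>

lemma conjugate_pair_product:
  fixes r \<phi> :: real and t :: complex
  shows "(t - of_real r * cis (- \<phi>)) * (t - of_real r * cis \<phi>)
       = t^2 - of_real (2 * r * cos \<phi>) * t + of_real (r^2)"
proof -
  have "(t - of_real r * cis (- \<phi>)) * (t - of_real r * cis \<phi>)
      = t^2 - of_real r * (cis (- \<phi>) + cis \<phi>) * t + of_real r * of_real r * (cis (- \<phi>) * cis \<phi>)"
    by (simp add: algebra_simps power2_eq_square)
  also have "cis (- \<phi>) + cis \<phi> = of_real (2 * cos \<phi>)"
    by (simp add: complex_eq_iff)
  also have "cis (- \<phi>) * cis \<phi> = 1"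
    by (simp add: cis_mult)
  finally show ?thesis
    by (simp add: power2_eq_square)
qed

lemma cubic_factorization:
  fixes c D t :: "'a :: field_char_0"
  assumes "c \<noteq> 0" and "D \<noteq> 0" and "D^2 = 1 - 4 * c^2"
  shows "1 + t^2 + 2 * c / D^3 * t^3
       = 2 * c / D^3 * (t^2 - 2 * c * D * t + D^2) * (t + D / (2 * c))"
proof -
  have "2 * c / D^3 * (t^2 - 2 * c * D * t + D^2) * (t + D / (2 * c))
      = 2 * c / D^3 * t^3 + (1 - 4 * c^2) / D^2 * t^2 + 1"
    using assms(1,2) by (simp add: field_simps power2_eq_square power3_eq_cube)
  also have "\<dots> = 1 + t^2 + 2 * c / D^3 * t^3"
    using assms(2) by (simp add: assms(3) [symmetric])
  finally show ?thesis ..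
qed

lemma cos_between_pi_thirds_pi_halves:
  assumes "pi / 3 < \<theta>" and "\<theta> < pi / 2"
  shows "0 < cos \<theta>" and "cos \<theta> < 1 / 2"
proof -
  show "0 < cos \<theta>"
    using assms by (intro cos_gt_zero_pi) (auto simp: field_simps)
  have "cos \<theta> < cos (pi / 3)"
    using assms by (intro cos_monotone_0_pi) auto
  then show "cos \<theta> < 1 / 2"
    by (simp add: cos_60)
qed

lemma zz_eq: "zz \<theta> = 2 * cos \<theta> / sqrt (1 - 4 * (cos \<theta>)^2) ^ 3"
  by (simp add: zz_def real_sqrt_power)

context
  fixes \<theta> :: real
  assumes cos_pos: "0 < cos \<theta>" and cos_less_half: "cos \<theta> < 1 / 2"
begin

private definition D :: real where "D = sqrt (1 - 4 * (cos \<theta>)^2)"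

private lemma D_pos: "0 < D"
proof -
  have "(cos \<theta>)^2 < (1 / 2)^2"
    using cos_pos cos_less_half by (intro power_strict_mono) auto
  then show ?thesis
    by (simp add: D_def power2_eq_square)
qed

private lemma D_squared: "D^2 = 1 - 4 * (cos \<theta>)^2"
  using D_pos by (simp add: D_def)

lemma t0_eq: "t0 \<theta> = of_real (sqrt (1 - 4 * (cos \<theta>)^2)) * cis (- \<theta>)"
proof -
  have "zz \<theta> * (2 * cos \<theta> + zeta \<theta>) = 2 * cos \<theta> / D^3 * (- (D^2) / (2 * cos \<theta>))"
    using cos_pos
    by (simp add: zz_eq zeta_def D_squared flip: D_def) (simp add: field_simps power2_eq_square)
  also have "\<dots> = - 1 / D"
    using cos_pos D_pos by (simp add: field_simps power3_eq_cube power2_eq_square)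
  finally have scale: "zz \<theta> * (2 * cos \<theta> + zeta \<theta>) = - 1 / D" .
  show ?thesis
    using D_pos unfolding t0_def D_def [symmetric] scale by (simp add: field_simps)
qed

lemma t1_eq: "t1 \<theta> = of_real (sqrt (1 - 4 * (cos \<theta>)^2)) * cis \<theta>"
  by (simp add: t1_def t0_eq mult.assoc cis_mult)

lemma t2_eq: "t2 \<theta> = - of_real (sqrt (1 - 4 * (cos \<theta>)^2) / (2 * cos \<theta>))"
  by (simp add: t2_def t0_eq zeta_def mult.assoc cis_mult mult.commute)

lemma zz_pos: "0 < zz \<theta>"
  using cos_pos D_pos by (simp add: zz_eq flip: D_def)

lemma cubic_eq_product_of_linear_factors:
  "1 + t^2 + of_real (zz \<theta>) * t^3 = of_real (zz \<theta>) * (t - t0 \<theta>) * (t - t1 \<theta>) * (t - t2 \<theta>)"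
proof -
  have "of_real (zz \<theta>) * (t - t0 \<theta>) * (t - t1 \<theta>) * (t - t2 \<theta>)
      = 2 * of_real (cos \<theta>) / of_real D ^ 3
        * (t^2 - 2 * of_real (cos \<theta>) * of_real D * t + of_real D ^ 2)
        * (t + of_real D / (2 * of_real (cos \<theta>)))"
    by (simp add: zz_eq t0_eq t1_eq t2_eq conjugate_pair_product mult.assoc flip: D_def)
  also have "\<dots> = 1 + t^2 + 2 * of_real (cos \<theta>) / of_real D ^ 3 * t^3"
    using cos_pos D_pos
    by (intro cubic_factorization [symmetric]) (auto simp flip: of_real_power simp: D_squared)
  finally show ?thesis
    by (simp add: zz_eq flip: D_def)
qed

end

theorem lemma3p3:
  fixes \<theta> :: real
  assumes "pi / 3 < \<theta>" and "\<theta> < pi / 2"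
  shows "{t :: complex. 1 + t^2 + complex_of_real (zz \<theta>) * t^3 = 0} = {t0 \<theta>, t1 \<theta>, t2 \<theta>}
     \<and> (\<forall>t :: complex. 1 + t^2 + complex_of_real (zz \<theta>) * t^3
            = complex_of_real (zz \<theta>) * (t - t0 \<theta>) * (t - t1 \<theta>) * (t - t2 \<theta>))"
proof -
  note cos_bounds = cos_between_pi_thirds_pi_halves [OF assms]
  note factorization = cubic_eq_product_of_linear_factors [OF cos_bounds]
  have "zz \<theta> \<noteq> 0"
    using zz_pos [OF cos_bounds] by simp
  then show ?thesis
    by (auto simp: factorization)
qed

end
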